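(* Let $n\geq 2$ be an integer. The annihilating-ideal graph $\mathbb{AG}(\mathbb{Z}_n)$ is perfect if and only if $n$ is of one of the forms $p_1^{\alpha_1}$, $p_1^{\alpha_1}p_2^{\alpha_2}$, $p_1^{\alpha_1}p_2p_3$, or $p_1p_2p_3p_4$, where $p_1,p_2,p_3,p_4$ are distinct primes and $\alpha_1,\alpha_2\in\mathbb{N}=\{1,2,3,\dots\}$.
   Context: For a commutative ring $R$ with unity, the annihilating-ideal graph $\mathbb{AG}(R)$ is the simple graph whose vertex set is the set of all non-zero ideals $I$ of $R$ with non-zero annihilator (i.e. there is a non-zero ideal $J$ with $IJ=0$), and two distinct vertices $I,J$ are adjacent if and only if $IJ=0$. A graph $G$ is perfect if $\omega(H)=\chi(H)$ (clique number equals chromatic number) for every induced subgraph $H$ of $G$. *)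

theory Defs
  imports "HOL-Algebra.Ideal_Product" "HOL-Number_Theory.Residues"
begin

definition is_clique :: "'a set \<Rightarrow> ('a \<Rightarrow> 'a \<Rightarrow> bool) \<Rightarrow> 'a set \<Rightarrow> bool" where
  "is_clique V E C \<longleftrightarrow> C \<subseteq> V \<and> (\<forall>x\<in>C. \<forall>y\<in>C. x \<noteq> y \<longrightarrow> E x y)"

definition clique_number :: "'a set \<Rightarrow> ('a \<Rightarrow> 'a \<Rightarrow> bool) \<Rightarrow> nat" where
  "clique_number V E = Sup {card C | C. is_clique V E C \<and> finite C}"

definition proper_colouring :: "'a set \<Rightarrow> ('a \<Rightarrow> 'a \<Rightarrow> bool) \<Rightarrow> nat \<Rightarrow> ('a \<Rightarrow> nat) \<Rightarrow> bool" where
  "proper_colouring V E k f \<longleftrightarrow> f ` V \<subseteq> {..<k} \<and>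
     (\<forall>x\<in>V. \<forall>y\<in>V. x \<noteq> y \<longrightarrow> E x y \<longrightarrow> f x \<noteq> f y)"

definition chromatic_number :: "'a set \<Rightarrow> ('a \<Rightarrow> 'a \<Rightarrow> bool) \<Rightarrow> nat" where
  "chromatic_number V E = (LEAST k. \<exists>f. proper_colouring V E k f)"

text \<open>Induced subgraph on S: vertex set S with E restricted to S (the notions above
  only look at edges between vertices of the given vertex set).\<close>
definition perfect_graph :: "'a set \<Rightarrow> ('a \<Rightarrow> 'a \<Rightarrow> bool) \<Rightarrow> bool" where
  "perfect_graph V E \<longleftrightarrow> (\<forall>S\<subseteq>V. clique_number S E = chromatic_number S E)"

definition ag_vertices :: "('a, 'b) ring_scheme \<Rightarrow> 'a set set" where
  "ag_vertices R = {I. ideal I R \<and> I \<noteq> {\<zero>\<^bsub>R\<^esub>} \<and>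
      (\<exists>J. ideal J R \<and> J \<noteq> {\<zero>\<^bsub>R\<^esub>} \<and> ideal_prod R I J = {\<zero>\<^bsub>R\<^esub>})}"

definition ag_adj :: "('a, 'b) ring_scheme \<Rightarrow> 'a set \<Rightarrow> 'a set \<Rightarrow> bool" where
  "ag_adj R I J \<longleftrightarrow> I \<noteq> J \<and> ideal_prod R I J = {\<zero>\<^bsub>R\<^esub>}"

end

theory Submission
  imports Defs
begin

(* The ideals of Z_n are the sets d Z_n for the divisors d of n, and d Z_n * d' Z_n = 0 iff n divides
   d d'. Hence AG(Z_n) is isomorphic to the graph on the divisors 1 < d < n in which d ~ d' iff n | d d',
   i.e. iff for every prime p the exponents of p in d and d' add up to at least its exponent in n.
   For the four listed shapes of n this condition is simple enough that every nonempty induced subgraph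
   has a simplicial vertex or a vertex whose neighbourhood lies in that of a non-adjacent vertex;
   removing such vertices one at a time colours every induced subgraph with as many colours as its
   clique number. For every other n, five suitable divisors induce a 5-cycle, whose clique number is 2
   but whose chromatic number is 3. *)

section \<open>Cliques, colourings and vertex elimination\<close>

lemma finite_clique: "finite S \<Longrightarrow> is_clique S E C \<Longrightarrow> finite C"
  unfolding is_clique_def using finite_subset by blast

lemma clique_number_eq_Max:
  assumes "finite S"
  shows "clique_number S E = Max {card C | C. is_clique S E C \<and> finite C}"
    and "finite {card C | C. is_clique S E C \<and> finite C}"
    and "{card C | C. is_clique S E C \<and> finite C} \<noteq> {}"
proof -
  show fin: "finite {card C | C. is_clique S E C \<and> finite C}"
    by (rule finite_subset[of _ "{..card S}"])
      (use assms in \<open>auto simp: is_clique_def intro: card_mono\<close>)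
  show ne: "{card C | C. is_clique S E C \<and> finite C} \<noteq> {}"
    using is_clique_def by fastforce
  show "clique_number S E = Max {card C | C. is_clique S E C \<and> finite C}"
    unfolding clique_number_def using cSup_eq_Max[OF fin ne] .
qed

lemma card_le_clique_number:
  assumes "finite S" "is_clique S E C"
  shows "card C \<le> clique_number S E"
proof -
  have "card C \<in> {card C | C. is_clique S E C \<and> finite C}"
    using assms finite_clique by blast
  then show ?thesis
    using clique_number_eq_Max[OF assms(1), of E] by simp
qed

lemma clique_number_attained:
  assumes "finite S"
  obtains C where "is_clique S E C" "card C = clique_number S E"
  using Max_in[OF clique_number_eq_Max(2,3)[OF assms, of E]] clique_number_eq_Max(1)[OF assms, of E] that
  by auto

lemma clique_number_mono:
  assumes "finite S" "S' \<subseteq> S"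
  shows "clique_number S' E \<le> clique_number S E"
proof -
  obtain C where "is_clique S' E C" "card C = clique_number S' E"
    using clique_number_attained assms finite_subset by metis
  moreover have "is_clique S E C"
    using \<open>is_clique S' E C\<close> assms(2) unfolding is_clique_def by blast
  ultimately show ?thesis
    using card_le_clique_number[OF assms(1)] by metis
qed

lemma card_clique_le_colours:
  assumes "proper_colouring S E k f" "is_clique S E C"
  shows "card C \<le> k"
proof -
  have "inj_on f C" "f ` C \<subseteq> {..<k}"
    using assms unfolding inj_on_def proper_colouring_def is_clique_def by blast+
  then show ?thesis
    using card_inj_on_le[of f C "{..<k}"] by simp
qed

lemma proper_colouring_mono:
  "proper_colouring S E k f \<Longrightarrow> k \<le> k' \<Longrightarrow> proper_colouring S E k' f"
  unfolding proper_colouring_def by auto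

lemma chromatic_number_le: "proper_colouring S E k f \<Longrightarrow> chromatic_number S E \<le> k"
  unfolding chromatic_number_def by (blast intro: Least_le)

lemma chromatic_number_colouring:
  assumes "finite S"
  obtains f where "proper_colouring S E (chromatic_number S E) f"
proof -
  obtain h where "bij_betw h S {0..<card S}"
    using ex_bij_betw_finite_nat[OF assms] by blast
  then have "proper_colouring S E (card S) h"
    unfolding proper_colouring_def bij_betw_def inj_on_def by auto
  then show ?thesis
    using that LeastI[of "\<lambda>k. \<exists>f. proper_colouring S E k f"] unfolding chromatic_number_def by blast
qed

lemma clique_number_le_chromatic_number:
  assumes "finite S"
  shows "clique_number S E \<le> chromatic_number S E"
  using assms chromatic_number_colouring clique_number_attained card_clique_le_colours by metis

definition simplicial_vertex :: "'a set \<Rightarrow> ('a \<Rightarrow> 'a \<Rightarrow> bool) \<Rightarrow> 'a \<Rightarrow> bool" where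
  "simplicial_vertex S E v \<longleftrightarrow> (\<forall>u\<in>S. \<forall>w\<in>S. E v u \<longrightarrow> E v w \<longrightarrow> u \<noteq> w \<longrightarrow> E u w)"

definition dominated_vertex :: "'a set \<Rightarrow> ('a \<Rightarrow> 'a \<Rightarrow> bool) \<Rightarrow> 'a \<Rightarrow> bool" where
  "dominated_vertex S E v \<longleftrightarrow> (\<exists>w\<in>S. w \<noteq> v \<and> \<not> E v w \<and> (\<forall>u\<in>S. E v u \<longrightarrow> E w u))"

lemma proper_colouring_extend_dominated:
  assumes sym: "\<And>x y. x \<in> S \<Longrightarrow> y \<in> S \<Longrightarrow> E x y \<Longrightarrow> E y x"
    and v: "v \<in> S" "dominated_vertex S E v"
    and f: "proper_colouring (S - {v}) E k f"
  obtains g where "proper_colouring S E k g"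
proof -
  obtain w where w: "w \<in> S" "w \<noteq> v" "\<not> E v w" "\<forall>u\<in>S. E v u \<longrightarrow> E w u"
    using v(2) unfolding dominated_vertex_def by blast
  have "(f (v := f w)) x \<noteq> (f (v := f w)) y" if "x \<in> S" "y \<in> S" "x \<noteq> y" "E x y" for x y
  proof -
    have "f u \<noteq> f w" if "u \<in> S" "u \<noteq> v" "E v u" for u
      using that f w unfolding proper_colouring_def by (metis Diff_iff singletonD)
    then show ?thesis
      using that f sym[of x y] unfolding proper_colouring_def by (auto simp: eq_commute[of "f w"])
  qed
  moreover have "f (v := f w) ` S \<subseteq> {..<k}"
    using f w unfolding proper_colouring_def by auto
  ultimately show ?thesis
    using that unfolding proper_colouring_def by blast
qed

lemma proper_colouring_extend_simplicial:
  assumes "finite S"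
    and sym: "\<And>x y. x \<in> S \<Longrightarrow> y \<in> S \<Longrightarrow> E x y \<Longrightarrow> E y x"
    and irrefl: "\<And>x. x \<in> S \<Longrightarrow> \<not> E x x"
    and v: "v \<in> S" "simplicial_vertex S E v"
    and f: "proper_colouring (S - {v}) E k f"
    and k: "clique_number S E \<le> k"
  obtains g where "proper_colouring S E k g"
proof -
  define N where "N = {u \<in> S. E v u}"
  have "is_clique S E (insert v N)"
    using v sym unfolding is_clique_def simplicial_vertex_def N_def by blast
  then have "card (insert v N) \<le> k"
    using card_le_clique_number[OF \<open>finite S\<close>] k le_trans by blast
  moreover have "finite N" "v \<notin> N"
    using \<open>finite S\<close> irrefl v unfolding N_def by auto
  ultimately have "card (f ` N) < card {..<k}"
    using card_image_le[of N f] by simp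
  then obtain c where c: "c < k" "c \<notin> f ` N"
    by (metis card_mono finite_imageI \<open>finite N\<close> lessThan_iff not_le subsetI)
  have "proper_colouring S E k (f (v := c))"
    using f c sym unfolding proper_colouring_def N_def by auto
  then show ?thesis
    using that by blast
qed

lemma colouring_by_vertex_elimination:
  assumes "finite V"
    and sym: "\<And>x y. x \<in> V \<Longrightarrow> y \<in> V \<Longrightarrow> E x y \<Longrightarrow> E y x"
    and irrefl: "\<And>x. x \<in> V \<Longrightarrow> \<not> E x x"
    and elim: "\<And>S. S \<subseteq> V \<Longrightarrow> S \<noteq> {} \<Longrightarrow>
                 \<exists>v\<in>S. simplicial_vertex S E v \<or> dominated_vertex S E v"
  shows "S \<subseteq> V \<Longrightarrow> \<exists>f. proper_colouring S E (clique_number S E) f"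
proof (induction "card S" arbitrary: S rule: less_induct)
  case less
  show ?case
  proof (cases "S = {}")
    case True
    then show ?thesis
      unfolding proper_colouring_def by blast
  next
    case False
    have "finite S"
      using less.prems \<open>finite V\<close> finite_subset by blast
    have symS: "\<And>x y. x \<in> S \<Longrightarrow> y \<in> S \<Longrightarrow> E x y \<Longrightarrow> E y x"
      and irreflS: "\<And>x. x \<in> S \<Longrightarrow> \<not> E x x"
      using sym irrefl less.prems by auto
    obtain v where v: "v \<in> S" "simplicial_vertex S E v \<or> dominated_vertex S E v"
      using elim[OF less.prems False] by blast
    obtain f where "proper_colouring (S - {v}) E (clique_number (S - {v}) E) f"
      using less.hyps[of "S - {v}"] less.prems card_Diff1_less[OF \<open>finite S\<close> v(1)] by blast
    then have f: "proper_colouring (S - {v}) E (clique_number S E) f"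
      using proper_colouring_mono clique_number_mono[OF \<open>finite S\<close>] by blast
    show ?thesis
      using v(2)
    proof
      assume "simplicial_vertex S E v"
      then show ?thesis
        using proper_colouring_extend_simplicial[OF \<open>finite S\<close> symS irreflS v(1) _ f order_refl]
        by blast
    next
      assume "dominated_vertex S E v"
      then show ?thesis
        using proper_colouring_extend_dominated[OF symS v(1) _ f] by blast
    qed
  qed
qed

lemma perfect_graph_by_vertex_elimination:
  assumes "finite V"
    and sym: "\<And>x y. x \<in> V \<Longrightarrow> y \<in> V \<Longrightarrow> E x y \<Longrightarrow> E y x"
    and irrefl: "\<And>x. x \<in> V \<Longrightarrow> \<not> E x x"
    and elim: "\<And>S. S \<subseteq> V \<Longrightarrow> S \<noteq> {} \<Longrightarrow>
                 \<exists>v\<in>S. simplicial_vertex S E v \<or> dominated_vertex S E v"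
  shows "perfect_graph V E"
  unfolding perfect_graph_def
proof (intro allI impI antisym)
  fix S assume "S \<subseteq> V"
  then have "finite S"
    using \<open>finite V\<close> finite_subset by blast
  show "clique_number S E \<le> chromatic_number S E"
    using clique_number_le_chromatic_number[OF \<open>finite S\<close>] .
  show "chromatic_number S E \<le> clique_number S E"
  proof -
    obtain f where "proper_colouring S E (clique_number S E) f"
      using colouring_by_vertex_elimination[OF \<open>finite V\<close> sym irrefl elim \<open>S \<subseteq> V\<close>] by blast
    then show ?thesis
      by (rule chromatic_number_le)
  qed
qed

lemma clique_number_image:
  assumes inj: "inj_on g V"
    and adj: "\<And>x y. x \<in> V \<Longrightarrow> y \<in> V \<Longrightarrow> E' (g x) (g y) \<longleftrightarrow> E x y"
    and "S \<subseteq> V"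
  shows "clique_number (g ` S) E' = clique_number S E"
proof -
  have inj_S: "inj_on g S"
    using inj_on_subset[OF inj \<open>S \<subseteq> V\<close>] .
  have adj_S: "E' (g x) (g y) \<longleftrightarrow> E x y" "g x = g y \<longleftrightarrow> x = y" if "x \<in> S" "y \<in> S" for x y
    using that adj \<open>S \<subseteq> V\<close> inj_on_eq_iff[OF inj_S] by auto
  have clique_image: "is_clique (g ` S) E' (g ` C) \<longleftrightarrow> is_clique S E C" if "C \<subseteq> S" for C
    using that unfolding is_clique_def by (auto simp: subset_iff adj_S)
  have card_image: "card (g ` C) = card C" "finite (g ` C) \<longleftrightarrow> finite C" if "C \<subseteq> S" for C
    using inj_on_subset[OF inj_S that] by (simp_all add: card_image finite_image_iff)
  have "{card C' | C'. is_clique (g ` S) E' C' \<and> finite C'} = {card C | C. is_clique S E C \<and> finite C}"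
  proof (intro equalityI subsetI)
    fix k assume "k \<in> {card C' | C'. is_clique (g ` S) E' C' \<and> finite C'}"
    then obtain C' where C': "is_clique (g ` S) E' C'" "finite C'" "k = card C'"
      by blast
    then obtain C where "C \<subseteq> S" "C' = g ` C"
      unfolding is_clique_def subset_image_iff by blast
    then show "k \<in> {card C | C. is_clique S E C \<and> finite C}"
      using C' clique_image card_image by blast
  next
    fix k assume "k \<in> {card C | C. is_clique S E C \<and> finite C}"
    then obtain C where C: "is_clique S E C" "finite C" "k = card C"
      by blast
    then have "C \<subseteq> S"
      unfolding is_clique_def by blast
    then show "k \<in> {card C' | C'. is_clique (g ` S) E' C' \<and> finite C'}"
      using C clique_image card_image by (metis (mono_tags, lifting) mem_Collect_eq)
  qed
  then show ?thesis
    unfolding clique_number_def by simp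
qed

lemma proper_colouring_cong:
  "(\<And>x. x \<in> S \<Longrightarrow> f x = h x) \<Longrightarrow> proper_colouring S E k f \<longleftrightarrow> proper_colouring S E k h"
  unfolding proper_colouring_def by auto

lemma chromatic_number_image:
  assumes inj: "inj_on g V"
    and adj: "\<And>x y. x \<in> V \<Longrightarrow> y \<in> V \<Longrightarrow> E' (g x) (g y) \<longleftrightarrow> E x y"
    and "S \<subseteq> V"
  shows "chromatic_number (g ` S) E' = chromatic_number S E"
proof -
  have inj_S: "inj_on g S"
    using inj_on_subset[OF inj \<open>S \<subseteq> V\<close>] .
  have adj_S: "E' (g x) (g y) \<longleftrightarrow> E x y" "g x = g y \<longleftrightarrow> x = y" if "x \<in> S" "y \<in> S" for x y
    using that adj \<open>S \<subseteq> V\<close> inj_on_eq_iff[OF inj_S] by auto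
  have colouring_image: "proper_colouring (g ` S) E' k f \<longleftrightarrow> proper_colouring S E k (f \<circ> g)"
    for k f
    unfolding proper_colouring_def by (auto simp: image_subset_iff adj_S)
  have "(\<exists>f. proper_colouring (g ` S) E' k f) \<longleftrightarrow> (\<exists>h. proper_colouring S E k h)" for k
  proof
    assume "\<exists>h. proper_colouring S E k h"
    then obtain h where "proper_colouring S E k h"
      by blast
    then have "proper_colouring S E k (h \<circ> inv_into S g \<circ> g)"
      using proper_colouring_cong[of S "h \<circ> inv_into S g \<circ> g" h] inv_into_f_f[OF inj_S] by simp
    then show "\<exists>f. proper_colouring (g ` S) E' k f"
      using colouring_image by blast
  qed (use colouring_image in blast)
  then show ?thesis
    unfolding chromatic_number_def by simp
qed

lemma perfect_graph_image:
  assumes inj: "inj_on g V"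
    and adj: "\<And>x y. x \<in> V \<Longrightarrow> y \<in> V \<Longrightarrow> E' (g x) (g y) \<longleftrightarrow> E x y"
  shows "perfect_graph (g ` V) E' \<longleftrightarrow> perfect_graph V E"
  unfolding perfect_graph_def subset_image_iff
  using clique_number_image[of g V E' E, OF inj adj] chromatic_number_image[of g V E' E, OF inj adj]
  by (auto, metis)

lemma pentagon_not_perfect:
  assumes V: "{a, b, c, d, e} \<subseteq> V"
    and sym: "\<And>x y. x \<in> V \<Longrightarrow> y \<in> V \<Longrightarrow> E x y \<Longrightarrow> E y x"
    and irrefl: "\<And>x. x \<in> V \<Longrightarrow> \<not> E x x"
    and edges: "E a b" "E b c" "E c d" "E d e" "E e a"
    and non_edges: "\<not> E a c" "\<not> E a d" "\<not> E b d" "\<not> E b e" "\<not> E c e"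
  shows "\<not> perfect_graph V E"
proof
  assume "perfect_graph V E"
  define S where "S = {a, b, c, d, e}"
  have non_edges': "\<not> E c a" "\<not> E d a" "\<not> E d b" "\<not> E e b" "\<not> E e c"
    using non_edges sym V by auto
  have "card C \<le> 2" if "is_clique S E C" for C
  proof (rule ccontr)
    assume "\<not> card C \<le> 2"
    then obtain T where "T \<subseteq> C" "card T = 3"
      using obtain_subset_with_card_n[of 3 C] by auto
    then obtain x y z where "{x, y, z} \<subseteq> C" "x \<noteq> y" "y \<noteq> z" "x \<noteq> z"
      unfolding card_3_iff by blast
    then have "{x, y, z} \<subseteq> S" "E x y" "E y z" "E x z"
      using that unfolding is_clique_def by auto
    then show False
      using non_edges non_edges' irrefl V unfolding S_def by auto
  qed
  then have "clique_number S E \<le> 2"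
    using clique_number_attained[of S E] unfolding S_def by (metis finite.emptyI finite.insertI)
  moreover have "clique_number S E = chromatic_number S E"
    using \<open>perfect_graph V E\<close> V unfolding perfect_graph_def S_def by blast
  moreover obtain f where "proper_colouring S E (chromatic_number S E) f"
    using chromatic_number_colouring[of S E] unfolding S_def by blast
  moreover have "a \<noteq> b" "b \<noteq> c" "c \<noteq> d" "d \<noteq> e" "e \<noteq> a"
    using edges irrefl V by auto
  ultimately have "f a < 2" "f b < 2" "f c < 2" "f d < 2" "f e < 2"
    "f a \<noteq> f b" "f b \<noteq> f c" "f c \<noteq> f d" "f d \<noteq> f e" "f e \<noteq> f a"
    using edges unfolding proper_colouring_def S_def by auto
  then show False
    by linarith
qed

section \<open>Threshold graphs on exponent vectors\<close>

lemma dominated_vertexI: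
  assumes "u \<in> S" "w \<in> S" "u \<noteq> w" "\<not> E u w"
    and "\<And>z. z \<in> S \<Longrightarrow> z \<noteq> w \<Longrightarrow> E u z \<Longrightarrow> E w z"
  shows "dominated_vertex S E u"
  using assms unfolding dominated_vertex_def by metis

lemma simplicial_vertex_threshold1:
  fixes x :: "'v \<Rightarrow> nat"
  assumes E: "\<And>u v. u \<in> S \<Longrightarrow> v \<in> S \<Longrightarrow> E u v \<longleftrightarrow> u \<noteq> v \<and> a \<le> x u + x v"
    and "S \<noteq> {}"
  shows "\<exists>v\<in>S. simplicial_vertex S E v"
proof -
  obtain v where v: "v \<in> S" "\<And>u. u \<in> S \<Longrightarrow> x v \<le> x u"
    using ex_has_least_nat[of "\<lambda>v. v \<in> S" _ x] \<open>S \<noteq> {}\<close> by blast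
  have "simplicial_vertex S E v"
    unfolding simplicial_vertex_def
  proof (intro ballI impI)
    fix u w assume "u \<in> S" "w \<in> S" "E v u" "E v w" "u \<noteq> w"
    then show "E u w"
      using v E[of v u] E[of u w] by fastforce
  qed
  then show ?thesis
    using v(1) by blast
qed

lemma removable_vertex_threshold2_if_small:
  fixes x y :: "'v \<Rightarrow> nat"
  assumes E: "\<And>u v. u \<in> S \<Longrightarrow> v \<in> S \<Longrightarrow> E u v \<longleftrightarrow> u \<noteq> v \<and> a \<le> x u + x v \<and> b \<le> y u + y v"
    and "v0 \<in> S" "2 * y v0 < b"
  shows "\<exists>v\<in>S. simplicial_vertex S E v \<or> dominated_vertex S E v"
proof -
  obtain z where z: "z \<in> S" "2 * y z < b"
    and z_min: "\<And>u. u \<in> S \<Longrightarrow> 2 * y u < b \<Longrightarrow> y z \<le> y u"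
    using ex_has_least_nat[of "\<lambda>v. v \<in> S \<and> 2 * y v < b" v0 y] assms(2,3) by blast
  \<comment> \<open>Neighbours of z easily satisfy the y-condition, so of two non-adjacent ones the one with
    smaller x is dominated by the other.\<close>
  show ?thesis
  proof (cases "simplicial_vertex S E z")
    case True
    then show ?thesis
      using z by blast
  next
    case False
    then obtain u1 u2 where u: "u1 \<in> S" "u2 \<in> S" "E z u1" "E z u2" "u1 \<noteq> u2" "\<not> E u1 u2"
      unfolding simplicial_vertex_def by blast
    obtain w1 w2 where w: "w1 \<in> S" "w2 \<in> S" "E z w1" "E z w2" "w1 \<noteq> w2" "\<not> E w1 w2"
      and "x w1 \<le> x w2"
    proof (cases "x u1 \<le> x u2")
      case True
      then show ?thesis
        using that u by blast
    next
      case False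
      then show ?thesis
        using that[of u2 u1] u E[of u1 u2] E[of u2 u1] by auto
    qed
    have "b \<le> y z + y w2"
      using E[of z w2] w(2,4) z(1) by simp
    have "dominated_vertex S E w1"
    proof (rule dominated_vertexI[of w1 S w2 E, OF w(1,2) w(5,6)])
      fix u assume "u \<in> S" "u \<noteq> w2" "E w1 u"
      moreover have "b \<le> y w2 + y u"
        using z z_min[OF \<open>u \<in> S\<close>] \<open>b \<le> y z + y w2\<close> by (cases "2 * y u < b") auto
      ultimately show "E w2 u"
        using E[of w1 u] E[of w2 u] w(1,2) \<open>x w1 \<le> x w2\<close> by auto
    qed
    then show ?thesis
      using w(1) by blast
  qed
qed

lemma removable_vertex_threshold2:
  fixes x y :: "'v \<Rightarrow> nat"
  assumes E: "\<And>u v. u \<in> S \<Longrightarrow> v \<in> S \<Longrightarrow> E u v \<longleftrightarrow> u \<noteq> v \<and> a \<le> x u + x v \<and> b \<le> y u + y v"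
    and "S \<noteq> {}"
  shows "\<exists>v\<in>S. simplicial_vertex S E v \<or> dominated_vertex S E v"
proof -
  consider v where "v \<in> S" "2 * y v < b" | v where "v \<in> S" "2 * x v < a"
    | "\<And>v. v \<in> S \<Longrightarrow> b \<le> 2 * y v \<and> a \<le> 2 * x v"
    by (meson not_le)
  then show ?thesis
  proof cases
    case 1
    then show ?thesis
      using removable_vertex_threshold2_if_small[OF E] by blast
  next
    case 2
    moreover have "\<And>u v. u \<in> S \<Longrightarrow> v \<in> S \<Longrightarrow> E u v \<longleftrightarrow> u \<noteq> v \<and> b \<le> y u + y v \<and> a \<le> x u + x v"
      using E by blast
    ultimately show ?thesis
      using removable_vertex_threshold2_if_small[of S E b y a x] by blast
  next
    case 3
    obtain v where "v \<in> S"
      using \<open>S \<noteq> {}\<close> by blast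
    moreover have "simplicial_vertex S E v"
      unfolding simplicial_vertex_def
    proof (intro ballI impI)
      fix u w assume "u \<in> S" "w \<in> S" "u \<noteq> w"
      then show "E u w"
        using 3[of u] 3[of w] E[of u w] by linarith
    qed
    ultimately show ?thesis
      by blast
  qed
qed

lemma threshold3_non_simplicial_witness:
  fixes x s t :: "'v \<Rightarrow> nat"
  assumes E: "\<And>u v. u \<in> S \<Longrightarrow> v \<in> S \<Longrightarrow>
      E u v \<longleftrightarrow> u \<noteq> v \<and> a \<le> x u + x v \<and> 1 \<le> s u + s v \<and> 1 \<le> t u + t v"
    and bool: "\<And>v. v \<in> S \<Longrightarrow> s v \<le> 1 \<and> t v \<le> 1"
    and twins: "\<And>u w. u \<in> S \<Longrightarrow> w \<in> S \<Longrightarrow> u \<noteq> w \<Longrightarrow> s u = s w \<Longrightarrow> t u = t w \<Longrightarrow> E u w"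
    and q: "q \<in> S" "s q = 1" "t q = 0" and r: "r \<in> S" "s r = 0" "t r = 1"
    and "\<not> simplicial_vertex S E q"
  shows "\<exists>f\<in>S. a \<le> x q + x f \<and> x r + x f < a"
proof -
  obtain u1 u2 where u: "u1 \<in> S" "u2 \<in> S" "E q u1" "E q u2" "u1 \<noteq> u2" "\<not> E u1 u2"
    using \<open>\<not> simplicial_vertex S E q\<close> unfolding simplicial_vertex_def by blast
  have t_u: "t u1 = 1" "t u2 = 1"
    using u E[of q u1] E[of q u2] q bool[of u1] bool[of u2] by auto
  have unique_r: "u = r" if "u \<in> S" "s u = 0" "t u = 1" for u
    using twins[of u r] E[of u r] that r by auto
  have "\<not> (s u1 = 1 \<and> s u2 = 1)"
    using twins[of u1 u2] u t_u by auto
  then consider "s u1 = 0" | "s u2 = 0"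
    using bool[of u1] bool[of u2] u(1,2) by fastforce
  then obtain f where f: "f \<in> S" "E q f" "\<not> E r f" "f \<noteq> r" "s f = 1"
  proof cases
    case 1
    then have "u1 = r"
      using unique_r u(1) t_u by blast
    then have "s u2 \<noteq> 0"
      using unique_r[of u2] u t_u by auto
    then have "s u2 = 1"
      using bool[of u2] u(2) by simp
    then show ?thesis
      using that[of u2] u \<open>u1 = r\<close> by blast
  next
    case 2
    then have "u2 = r"
      using unique_r u(2) t_u by blast
    then have "s u1 \<noteq> 0"
      using unique_r[of u1] u t_u by auto
    then have "s u1 = 1"
      using bool[of u1] u(1) by simp
    moreover have "\<not> E u2 u1"
      using u E[of u1 u2] E[of u2 u1] by auto
    ultimately show ?thesis
      using that[of u1] u \<open>u2 = r\<close> by blast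
  qed
  show ?thesis
    using f E[of q f] E[of r f] q r by auto
qed

lemma simplicial_vertex_threshold3_if_no_10:
  fixes x s t :: "'v \<Rightarrow> nat"
  assumes E: "\<And>u v. u \<in> S \<Longrightarrow> v \<in> S \<Longrightarrow>
      E u v \<longleftrightarrow> u \<noteq> v \<and> a \<le> x u + x v \<and> 1 \<le> s u + s v \<and> 1 \<le> t u + t v"
    and bool: "\<And>v. v \<in> S \<Longrightarrow> s v \<le> 1 \<and> t v \<le> 1"
    and twins: "\<And>u w. u \<in> S \<Longrightarrow> w \<in> S \<Longrightarrow> u \<noteq> w \<Longrightarrow> s u = s w \<Longrightarrow> t u = t w \<Longrightarrow> E u w"
    and no_10: "\<And>v. v \<in> S \<Longrightarrow> s v = 1 \<Longrightarrow> t v = 1"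
    and "S \<noteq> {}"
  shows "\<exists>v\<in>S. simplicial_vertex S E v"
proof -
  obtain v where v: "v \<in> S" "\<And>u. u \<in> S \<Longrightarrow> s v \<le> s u"
    using ex_has_least_nat[of "\<lambda>v. v \<in> S" _ s] \<open>S \<noteq> {}\<close> by blast
  have "s u = 1 \<and> t u = 1" if "u \<in> S" "E v u" for u
  proof -
    have "1 \<le> s u"
      using v(2)[OF that(1)] E[of v u] that v(1) by (cases "s v = 0") auto
    then show ?thesis
      using bool[of u] no_10[of u] that(1) by simp
  qed
  then have "simplicial_vertex S E v"
    using twins unfolding simplicial_vertex_def by simp
  then show ?thesis
    using v(1) by blast
qed

lemma simplicial_vertex_threshold3_if_twins_adjacent:
  fixes x s t :: "'v \<Rightarrow> nat"
  assumes E: "\<And>u v. u \<in> S \<Longrightarrow> v \<in> S \<Longrightarrow>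
      E u v \<longleftrightarrow> u \<noteq> v \<and> a \<le> x u + x v \<and> 1 \<le> s u + s v \<and> 1 \<le> t u + t v"
    and bool: "\<And>v. v \<in> S \<Longrightarrow> s v \<le> 1 \<and> t v \<le> 1"
    and twins: "\<And>u w. u \<in> S \<Longrightarrow> w \<in> S \<Longrightarrow> u \<noteq> w \<Longrightarrow> s u = s w \<Longrightarrow> t u = t w \<Longrightarrow> E u w"
    and "S \<noteq> {}"
  shows "\<exists>v\<in>S. simplicial_vertex S E v"
proof -
  have E': "\<And>u v. u \<in> S \<Longrightarrow> v \<in> S \<Longrightarrow>
      E u v \<longleftrightarrow> u \<noteq> v \<and> a \<le> x u + x v \<and> 1 \<le> t u + t v \<and> 1 \<le> s u + s v"
    and bool': "\<And>v. v \<in> S \<Longrightarrow> t v \<le> 1 \<and> s v \<le> 1"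
    and twins': "\<And>u w. u \<in> S \<Longrightarrow> w \<in> S \<Longrightarrow> u \<noteq> w \<Longrightarrow> t u = t w \<Longrightarrow> s u = s w \<Longrightarrow> E u w"
    using E bool twins by auto
  consider q r where "q \<in> S" "s q = 1" "t q = 0" "r \<in> S" "s r = 0" "t r = 1"
    | "\<And>v. v \<in> S \<Longrightarrow> s v = 1 \<Longrightarrow> t v = 1" | "\<And>v. v \<in> S \<Longrightarrow> t v = 1 \<Longrightarrow> s v = 1"
    using bool by (metis le_antisym less_one not_le)
  then show ?thesis
  proof cases
    case (1 q r)
    have "simplicial_vertex S E q \<or> simplicial_vertex S E r"
    proof (rule ccontr)
      assume "\<not> ?thesis"
      then obtain f g where "a \<le> x q + x f" "x r + x f < a" "a \<le> x r + x g" "x q + x g < a"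
        using threshold3_non_simplicial_witness[OF E bool twins, where q = q and r = r] 1
          threshold3_non_simplicial_witness[OF E' bool' twins', where q = r and r = q] by blast
      then show False
        by linarith
    qed
    then show ?thesis
      using 1 by blast
  next
    case 2
    then show ?thesis
      using simplicial_vertex_threshold3_if_no_10[OF E bool twins] \<open>S \<noteq> {}\<close> by blast
  next
    case 3
    then show ?thesis
      using simplicial_vertex_threshold3_if_no_10[OF E' bool' twins'] \<open>S \<noteq> {}\<close> by blast
  qed
qed

lemma removable_vertex_threshold3:
  fixes x s t :: "'v \<Rightarrow> nat"
  assumes E: "\<And>u v. u \<in> S \<Longrightarrow> v \<in> S \<Longrightarrow>
      E u v \<longleftrightarrow> u \<noteq> v \<and> a \<le> x u + x v \<and> 1 \<le> s u + s v \<and> 1 \<le> t u + t v"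
    and bool: "\<And>v. v \<in> S \<Longrightarrow> s v \<le> 1 \<and> t v \<le> 1"
    and "S \<noteq> {}"
  shows "\<exists>v\<in>S. simplicial_vertex S E v \<or> dominated_vertex S E v"
proof (cases "\<exists>u\<in>S. \<exists>w\<in>S. u \<noteq> w \<and> s u = s w \<and> t u = t w \<and> x u \<le> x w \<and> \<not> E u w")
  case True
  then obtain u w where "u \<in> S" "w \<in> S" "u \<noteq> w" "s u = s w" "t u = t w" "x u \<le> x w" "\<not> E u w"
    by blast
  then have "dominated_vertex S E u"
    by (intro dominated_vertexI[of u S w]) (auto simp: E)
  then show ?thesis
    using \<open>u \<in> S\<close> by blast
next
  case False
  have "E u w" if "u \<in> S" "w \<in> S" "u \<noteq> w" "s u = s w" "t u = t w" for u w
  proof (rule ccontr)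
    assume "\<not> E u w"
    moreover have "E w u \<longleftrightarrow> E u w"
      using E[of u w] E[of w u] that by auto
    ultimately show False
      using False that nat_le_linear[of "x u" "x w"] by metis
  qed
  then show ?thesis
    using simplicial_vertex_threshold3_if_twins_adjacent[OF E bool _ \<open>S \<noteq> {}\<close>] by blast
qed

lemma removable_vertex_threshold4:
  fixes c1 c2 c3 c4 :: "'v \<Rightarrow> nat"
  assumes E: "\<And>u v. u \<in> S \<Longrightarrow> v \<in> S \<Longrightarrow> E u v \<longleftrightarrow> u \<noteq> v \<and>
      1 \<le> c1 u + c1 v \<and> 1 \<le> c2 u + c2 v \<and> 1 \<le> c3 u + c3 v \<and> 1 \<le> c4 u + c4 v"
    and bool: "\<And>v. v \<in> S \<Longrightarrow> c1 v \<le> 1 \<and> c2 v \<le> 1 \<and> c3 v \<le> 1 \<and> c4 v \<le> 1"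
    and "S \<noteq> {}"
  shows "\<exists>v\<in>S. simplicial_vertex S E v \<or> dominated_vertex S E v"
proof -
  define weight where "weight v = c1 v + c2 v + c3 v + c4 v" for v
  obtain v where v: "v \<in> S" "\<And>u. u \<in> S \<Longrightarrow> weight v \<le> weight u"
    using ex_has_least_nat[of "\<lambda>v. v \<in> S" _ weight] \<open>S \<noteq> {}\<close> by blast
  show ?thesis
  proof (cases "simplicial_vertex S E v")
    case True
    then show ?thesis
      using v(1) by blast
  next
    case False
    then obtain u1 u2 where u: "u1 \<in> S" "u2 \<in> S" "E v u1" "E v u2" "u1 \<noteq> u2" "\<not> E u1 u2"
      unfolding simplicial_vertex_def by blast
    \<comment> \<open>Were u1, u2 incomparable, each would miss two coordinates and v would have to cover
      three, making v heavier than u1.\<close>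
    have "(c1 u1 \<le> c1 u2 \<and> c2 u1 \<le> c2 u2 \<and> c3 u1 \<le> c3 u2 \<and> c4 u1 \<le> c4 u2) \<or>
          (c1 u2 \<le> c1 u1 \<and> c2 u2 \<le> c2 u1 \<and> c3 u2 \<le> c3 u1 \<and> c4 u2 \<le> c4 u1)"
      using bool[OF v(1)] bool[OF u(1)] bool[OF u(2)] E[of v u1] E[of v u2] E[of u1 u2]
        v(1) u v(2)[OF u(1)] v(2)[OF u(2)] unfolding weight_def by arith
    moreover have "dominated_vertex S E u"
      if "u \<in> S" "w \<in> S" "u \<noteq> w" "\<not> E u w"
        "c1 u \<le> c1 w" "c2 u \<le> c2 w" "c3 u \<le> c3 w" "c4 u \<le> c4 w" for u w
      using that by (intro dominated_vertexI[of u S w]) (auto simp: E)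
    moreover have "\<not> E u2 u1"
      using u E[of u1 u2] E[of u2 u1] by auto
    ultimately show ?thesis
      using u by blast
  qed
qed

section \<open>Ideals of Z_n and the divisor graph\<close>

context residues
begin

definition multiples :: "int \<Rightarrow> int set" where
  "multiples d = {x \<in> carrier R. d dvd x}"

lemma multiples_eq_PIdl:
  assumes "0 < d" "d dvd m"
  shows "multiples d = PIdl (d mod m)"
proof (intro equalityI subsetI)
  fix y assume "y \<in> multiples d"
  then obtain k where y: "0 \<le> y" "y < m" "y = d * k"
    unfolding multiples_def res_carrier_eq by auto
  then have "0 \<le> k" "k \<le> y"
    using assms(1) by (auto simp: zero_le_mult_iff mult_le_cancel_right1)
  then have "k \<in> carrier R"
    using y by (simp add: res_carrier_eq)
  moreover have "k \<otimes> (d mod m) = y"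
    using y by (simp add: res_mult_eq mod_mult_right_eq mult.commute)
  ultimately show "y \<in> PIdl (d mod m)"
    unfolding cgenideal_def by blast
next
  fix y assume "y \<in> PIdl (d mod m)"
  then obtain x where "x \<in> carrier R" "y = (x * (d mod m)) mod m"
    unfolding cgenideal_def res_mult_eq by blast
  then show "y \<in> multiples d"
    using assms by (simp add: multiples_def res_carrier_eq dvd_mod_iff)
qed

lemma ideal_multiples: "0 < d \<Longrightarrow> d dvd m \<Longrightarrow> ideal (multiples d) R"
  using multiples_eq_PIdl cgenideal_ideal m_gt_one by (simp add: res_carrier_eq)

lemma self_in_multiples: "0 < d \<Longrightarrow> d < m \<Longrightarrow> d \<in> multiples d"
  unfolding multiples_def by (simp add: res_carrier_eq)

lemma multiples_eq_zero_iff: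
  assumes "0 < d" "d dvd m"
  shows "multiples d = {\<zero>} \<longleftrightarrow> d = m"
proof
  assume "multiples d = {\<zero>}"
  then have "\<not> d < m"
    using self_in_multiples[OF assms(1)] assms(1) by (auto simp: res_zero_eq)
  then show "d = m"
    using zdvd_imp_le[OF assms(2)] m_gt_one by simp
qed (use m_gt_one in \<open>auto simp: multiples_def res_carrier_eq res_zero_eq dest: zdvd_imp_le\<close>)

lemma ideal_diff_mult_mod:
  assumes I: "ideal I R" and "z mod m \<in> I" "d \<in> I"
  shows "(z - q * d) mod m \<in> I"
proof -
  have sub: "additive_subgroup I R"
    using I ideal.axioms(1) by blast
  have "(q mod m) \<otimes> d \<in> I"
    using I \<open>d \<in> I\<close> m_gt_one by (simp add: ideal.I_l_closed res_carrier_eq)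
  then have "z mod m \<oplus> \<ominus> ((q mod m) \<otimes> d) \<in> I"
    using sub \<open>z mod m \<in> I\<close> by (simp add: additive_subgroup.a_closed additive_subgroup.a_inv_closed)
  moreover have "z mod m \<oplus> \<ominus> ((q mod m) \<otimes> d) = (z - q * d) mod m"
    unfolding res_add_eq res_neg_eq res_mult_eq mod_mult_left_eq mod_minus_eq mod_add_right_eq
    by (simp add: mod_diff_left_eq)
  ultimately show ?thesis
    by simp
qed

lemma ideal_eq_multiples:
  assumes I: "ideal I R"
  obtains d where "0 < d" "d dvd m" "I = multiples d"
proof (cases "I = {\<zero>}")
  case True
  then show ?thesis
    using that[of m] multiples_eq_zero_iff[of m] m_gt_one by simp
next
  case False
  have I_carrier: "I \<subseteq> {0..<m}"
    using I ideal.axioms(1) additive_subgroup.a_subset res_carrier_eq by fastforce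
  have "\<zero> \<in> I"
    using I ideal.axioms(1) additive_subgroup.zero_closed by blast
  then obtain y where "y \<in> I" "y \<noteq> 0"
    using False by (auto simp: res_zero_eq)
  define P where "P = {x \<in> I. 0 < x}"
  have "finite P" "P \<noteq> {}"
    using I_carrier finite_subset \<open>y \<in> I\<close> \<open>y \<noteq> 0\<close> unfolding P_def by fastforce+
  define d where "d = Min P"
  have d: "d \<in> I" "0 < d" "d < m"
    using Min_in[OF \<open>finite P\<close> \<open>P \<noteq> {}\<close>] I_carrier unfolding d_def P_def by auto
  have dvd_if_in_I: "d dvd z" if "z mod m \<in> I" for z
  proof -
    have "(z - (z div d) * d) mod m = z mod d"
      using d by (simp add: minus_div_mult_eq_mod order.strict_trans[OF pos_mod_bound])
    then have "z mod d \<in> I"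
      using ideal_diff_mult_mod[OF I that d(1), of "z div d"] by simp
    moreover have "z mod d < d"
      using d(2) by simp
    ultimately have "z mod d \<notin> P"
      using Min_le[OF \<open>finite P\<close>, of "z mod d"] unfolding d_def by fastforce
    then show ?thesis
      using \<open>z mod d \<in> I\<close> d(2) unfolding P_def by (simp add: dvd_eq_mod_eq_0 order_less_le)
  qed
  have "d dvd m"
    using dvd_if_in_I[of m] \<open>\<zero> \<in> I\<close> by (simp add: res_zero_eq)
  have "I \<subseteq> multiples d"
    using dvd_if_in_I I_carrier by (auto simp: multiples_def res_carrier_eq)
  moreover have "multiples d \<subseteq> I"
    using multiples_eq_PIdl \<open>d dvd m\<close> d cgenideal_minimal[OF I] by simp
  ultimately show ?thesis
    using that[of d] d \<open>d dvd m\<close> by blast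
qed

lemma ideal_prod_multiples_eq_zero_iff:
  assumes "0 < d" "d dvd m" "0 < d'" "d' dvd m"
  shows "ideal_prod R (multiples d) (multiples d') = {\<zero>} \<longleftrightarrow> m dvd d * d'"
proof
  assume "m dvd d * d'"
  have "s = \<zero>" if "s \<in> ideal_prod R (multiples d) (multiples d')" for s
    using that
  proof (induction s rule: ideal_prod.induct)
    case (prod i j)
    then have "m dvd i * j"
      using \<open>m dvd d * d'\<close> unfolding multiples_def by (auto intro: dvd_trans mult_dvd_mono)
    then show ?case
      by (simp add: res_mult_eq res_zero_eq)
  qed (simp add: res_add_eq res_zero_eq)
  moreover have "\<zero> \<otimes> \<zero> \<in> ideal_prod R (multiples d) (multiples d')"
    using m_gt_one by (intro ideal_prod.prod) (auto simp: multiples_def res_carrier_eq res_zero_eq)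
  ultimately show "ideal_prod R (multiples d) (multiples d') = {\<zero>}"
    by (auto simp: res_mult_eq res_zero_eq)
next
  assume zero: "ideal_prod R (multiples d) (multiples d') = {\<zero>}"
  show "m dvd d * d'"
  proof (cases "d < m \<and> d' < m")
    case True
    then have "d \<otimes> d' \<in> ideal_prod R (multiples d) (multiples d')"
      using assms self_in_multiples by (blast intro: ideal_prod.prod)
    then show ?thesis
      using zero by (simp add: res_mult_eq res_zero_eq dvd_eq_mod_eq_0)
  next
    case False
    then have "d = m \<or> d' = m"
      using assms zdvd_imp_le[of d m] zdvd_imp_le[of d' m] m_gt_one by force
    then show ?thesis
      by auto
  qed
qed

lemma multiples_eq_iff:
  assumes "0 < d" "d < m" "0 < d'" "d' < m"
  shows "multiples d = multiples d' \<longleftrightarrow> d = d'"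
proof
  assume "multiples d = multiples d'"
  then have "d' dvd d" "d dvd d'"
    using self_in_multiples assms unfolding multiples_def by blast+
  then show "d = d'"
    using assms by (simp add: zdvd_antisym_nonneg)
qed simp

lemma ag_vertices_eq: "ag_vertices R = multiples ` {d. d dvd m \<and> 1 < d \<and> d < m}"
proof (intro equalityI subsetI)
  fix I assume "I \<in> ag_vertices R"
  then obtain J where I: "ideal I R" "I \<noteq> {\<zero>}" and J: "ideal J R" "J \<noteq> {\<zero>}"
    and IJ: "ideal_prod R I J = {\<zero>}"
    unfolding ag_vertices_def by blast
  obtain d where d: "0 < d" "d dvd m" "I = multiples d"
    using ideal_eq_multiples[OF I(1)] by blast
  obtain d' where d': "0 < d'" "d' dvd m" "J = multiples d'"
    using ideal_eq_multiples[OF J(1)] by blast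
  have "d < m" "d' < m"
    using I(2) J(2) d d' multiples_eq_zero_iff zdvd_imp_le[of _ m] m_gt_one by force+
  moreover have "m dvd d * d'"
    using IJ d d' ideal_prod_multiples_eq_zero_iff by blast
  then have "d \<noteq> 1"
    using d' \<open>d' < m\<close> zdvd_imp_le by fastforce
  ultimately show "I \<in> multiples ` {d. d dvd m \<and> 1 < d \<and> d < m}"
    using d by auto
next
  fix I assume "I \<in> multiples ` {d. d dvd m \<and> 1 < d \<and> d < m}"
  then obtain d where d: "d dvd m" "1 < d" "d < m" "I = multiples d"
    by blast
  then obtain d' where "m = d * d'"
    by blast
  then have d': "0 < d'" "d' dvd m" "d' < m"
    using d m_gt_one by (auto simp: zero_less_mult_iff)
  have "ideal (multiples d') R" "multiples d' \<noteq> {\<zero>}" "ideal_prod R I (multiples d') = {\<zero>}"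
    using d d' \<open>m = d * d'\<close> ideal_multiples multiples_eq_zero_iff ideal_prod_multiples_eq_zero_iff
    by auto
  moreover have "ideal I R" "I \<noteq> {\<zero>}"
    using d ideal_multiples multiples_eq_zero_iff by auto
  ultimately show "I \<in> ag_vertices R"
    unfolding ag_vertices_def by blast
qed

end

definition nontrivial_divisors :: "nat \<Rightarrow> nat set" where
  "nontrivial_divisors n = {d. d dvd n \<and> 1 < d \<and> d < n}"

definition divisor_adj :: "nat \<Rightarrow> nat \<Rightarrow> nat \<Rightarrow> bool" where
  "divisor_adj n d d' \<longleftrightarrow> d \<noteq> d' \<and> n dvd d * d'"

lemma perfect_ag_residue_ring_iff:
  assumes "2 \<le> n"
  shows "perfect_graph (ag_vertices (residue_ring (int n))) (ag_adj (residue_ring (int n))) \<longleftrightarrow>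
    perfect_graph (nontrivial_divisors n) (divisor_adj n)"
proof -
  interpret residues "int n" "residue_ring (int n)"
    using assms by unfold_locales auto
  let ?g = "multiples \<circ> int"
  have "{d. d dvd int n \<and> 1 < d \<and> d < int n} = int ` nontrivial_divisors n"
  proof (intro equalityI subsetI)
    fix d assume "d \<in> {d. d dvd int n \<and> 1 < d \<and> d < int n}"
    then have "d = int (nat d)" "nat d \<in> nontrivial_divisors n"
      by (auto simp: nontrivial_divisors_def nat_dvd_iff)
    then show "d \<in> int ` nontrivial_divisors n"
      by (metis imageI)
  qed (auto simp: nontrivial_divisors_def)
  then have "ag_vertices (residue_ring (int n)) = ?g ` nontrivial_divisors n"
    by (simp add: ag_vertices_eq image_comp)
  moreover have "inj_on ?g (nontrivial_divisors n)"
    by (rule inj_onI) (auto simp: nontrivial_divisors_def multiples_eq_iff)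
  moreover have "ag_adj (residue_ring (int n)) (?g x) (?g y) \<longleftrightarrow> divisor_adj n x y"
    if "x \<in> nontrivial_divisors n" "y \<in> nontrivial_divisors n" for x y
    using that ideal_prod_multiples_eq_zero_iff[of "int x" "int y"] multiples_eq_iff[of "int x" "int y"]
    unfolding ag_adj_def divisor_adj_def nontrivial_divisors_def
    by (auto simp flip: of_nat_mult)
  ultimately show ?thesis
    using perfect_graph_image by metis
qed

section \<open>Induced pentagons in the divisor graph\<close>

lemma divisor_adj_sym: "divisor_adj n x y \<Longrightarrow> divisor_adj n y x"
  unfolding divisor_adj_def by (auto simp: mult.commute)

lemma divisor_adj_irrefl: "\<not> divisor_adj n x x"
  unfolding divisor_adj_def by simp

lemma finite_nontrivial_divisors: "finite (nontrivial_divisors n)"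
  unfolding nontrivial_divisors_def by (rule finite_subset[of _ "{..n}"]) auto

lemma divisor_pentagon_not_perfect:
  fixes n v1 v2 v3 v4 v5 :: nat
  assumes "0 < n"
    and dvd_n: "v1 dvd n" "v2 dvd n" "v3 dvd n" "v4 dvd n" "v5 dvd n"
    and edges: "n dvd v1 * v2" "n dvd v2 * v3" "n dvd v3 * v4" "n dvd v4 * v5" "n dvd v5 * v1"
    and non_edges: "\<not> n dvd v1 * v3" "\<not> n dvd v1 * v4" "\<not> n dvd v2 * v4" "\<not> n dvd v2 * v5"
      "\<not> n dvd v3 * v5"
  shows "\<not> perfect_graph (nontrivial_divisors n) (divisor_adj n)"
proof -
  have vertex: "v \<in> nontrivial_divisors n"
    if "v dvd n" "w dvd n" "n dvd v * w" "\<not> n dvd v * x" "\<not> n dvd w * y" for v w x y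
  proof -
    have "v \<noteq> 1"
      using that dvd_antisym by fastforce
    moreover have "v \<noteq> 0" "v \<le> n" "v \<noteq> n"
      using that \<open>0 < n\<close> dvd_imp_le by auto
    ultimately show ?thesis
      using that(1) unfolding nontrivial_divisors_def by simp
  qed
  have non_edges': "\<not> n dvd v4 * v1" "\<not> n dvd v5 * v2"
    using non_edges(2,4) by (simp_all add: mult.commute)
  have "{v1, v2, v3, v4, v5} \<subseteq> nontrivial_divisors n"
    using vertex[of v1 v2 v3 v4] vertex[of v2 v3 v4 v5] vertex[of v3 v4 v5 v1]
      vertex[of v4 v5 v1 v2] vertex[of v5 v1 v2 v3] dvd_n edges non_edges non_edges'
    by simp
  moreover have "v1 \<noteq> v2" "v2 \<noteq> v3" "v3 \<noteq> v4" "v4 \<noteq> v5" "v5 \<noteq> v1"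
    using edges non_edges non_edges' by auto
  ultimately show ?thesis
    using edges non_edges
    by (intro pentagon_not_perfect[of v1 v2 v3 v4 v5 _ "divisor_adj n"])
      (simp_all add: divisor_adj_sym divisor_adj_irrefl, simp_all add: divisor_adj_def)
qed

lemma not_dvd_if_coprime_factor:
  fixes n x M :: nat
  assumes "x dvd n" "1 < x" "coprime x M"
  shows "\<not> n dvd M"
  using assms coprime_common_divisor[of x M x] dvd_trans by fastforce

lemma not_dvd_if_prime_power_factor:
  fixes n p a k M :: nat
  assumes "p ^ a dvd n" "prime p" "coprime p M" "k < a"
  shows "\<not> n dvd p ^ k * M"
proof
  assume "n dvd p ^ k * M"
  then have "p ^ k * p ^ (a - k) dvd p ^ k * M"
    using assms(1,4) dvd_trans by (metis le_add_diff_inverse less_imp_le power_add)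
  then have "p dvd M"
    using assms(2,4) dvd_trans[of p "p ^ (a - k)" M] by (simp add: prime_gt_0_nat)
  then show False
    using assms(2,3) by (metis coprime_common_divisor dvd_refl not_prime_unit)
qed

lemma not_perfect_if_five_coprime_factors:
  fixes n x1 x2 x3 x4 x5 :: nat
  assumes n: "n = x1 * x2 * x3 * x4 * x5"
    and gt1: "1 < x1" "1 < x2" "1 < x3" "1 < x4" "1 < x5"
    and coprime: "coprime x1 x2" "coprime x1 x3" "coprime x1 x4" "coprime x1 x5" "coprime x2 x3"
      "coprime x2 x4" "coprime x2 x5" "coprime x3 x4" "coprime x3 x5" "coprime x4 x5"
  shows "\<not> perfect_graph (nontrivial_divisors n) (divisor_adj n)"
  \<comment> \<open>Each vertex omits two of the factors; consecutive vertices omit disjoint pairs, vertices two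
    apart omit a common factor.\<close>
proof (rule divisor_pentagon_not_perfect[of n "x3 * x4 * x5" "x1 * x2 * x5" "x2 * x3 * x4"
      "x1 * x4 * x5" "x1 * x2 * x3"])
  show "0 < n"
    using n gt1 by simp
  show "x3 * x4 * x5 dvd n" "x1 * x2 * x5 dvd n" "x2 * x3 * x4 dvd n" "x1 * x4 * x5 dvd n"
    "x1 * x2 * x3 dvd n"
    unfolding n by (simp_all add: dvd_def ac_simps)
  show "n dvd x3 * x4 * x5 * (x1 * x2 * x5)" "n dvd x1 * x2 * x5 * (x2 * x3 * x4)"
    "n dvd x2 * x3 * x4 * (x1 * x4 * x5)" "n dvd x1 * x4 * x5 * (x1 * x2 * x3)"
    "n dvd x1 * x2 * x3 * (x3 * x4 * x5)"
    unfolding n by (simp_all add: dvd_def ac_simps)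
  have coprime': "coprime x2 x1" "coprime x3 x1" "coprime x4 x1" "coprime x5 x1" "coprime x3 x2"
      "coprime x4 x2" "coprime x5 x2" "coprime x4 x3" "coprime x5 x3" "coprime x5 x4"
    using coprime by (simp_all add: coprime_commute)
  have "x1 dvd n" "x2 dvd n" "x3 dvd n" "x4 dvd n" "x5 dvd n"
    unfolding n by simp_all
  note facts = this gt1 coprime coprime'
  show "\<not> n dvd x3 * x4 * x5 * (x2 * x3 * x4)"
    by (rule not_dvd_if_coprime_factor[of x1]) (use facts in auto)
  show "\<not> n dvd x3 * x4 * x5 * (x1 * x4 * x5)"
    by (rule not_dvd_if_coprime_factor[of x2]) (use facts in auto)
  show "\<not> n dvd x1 * x2 * x5 * (x1 * x4 * x5)"
    by (rule not_dvd_if_coprime_factor[of x3]) (use facts in auto)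
  show "\<not> n dvd x1 * x2 * x5 * (x1 * x2 * x3)"
    by (rule not_dvd_if_coprime_factor[of x4]) (use facts in auto)
  show "\<not> n dvd x2 * x3 * x4 * (x1 * x2 * x3)"
    by (rule not_dvd_if_coprime_factor[of x5]) (use facts in auto)
qed

lemma not_perfect_if_prime_square_and_three_coprime_factors:
  fixes n p a x y z :: nat
  assumes n: "n = p ^ a * x * y * z" and p: "prime p" and "2 \<le> a"
    and gt1: "1 < x" "1 < y" "1 < z"
    and coprime: "coprime x y" "coprime x z" "coprime y z" "coprime p x" "coprime p y" "coprime p z"
  shows "\<not> perfect_graph (nontrivial_divisors n) (divisor_adj n)"
proof -
  obtain b where a: "a = b + 2"
    using \<open>2 \<le> a\<close> by (metis add.commute le_Suc_ex)
  have "0 < n"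
    using n gt1 p prime_gt_0_nat by simp
  have factors: "x dvd n" "y dvd n" "z dvd n" "p ^ (b + 2) dvd n"
    unfolding n a by simp_all
  note facts = gt1 coprime coprime[THEN coprime_commute[THEN iffD1]]
  show ?thesis
  proof (rule divisor_pentagon_not_perfect[OF \<open>0 < n\<close>, of "x * y * z" "p ^ (b + 2) * z"
        "p ^ (b + 1) * x * y" "p * y * z" "p ^ (b + 2) * x"])
    show "x * y * z dvd n" "p ^ (b + 2) * z dvd n" "p ^ (b + 1) * x * y dvd n" "p * y * z dvd n"
      "p ^ (b + 2) * x dvd n"
      unfolding n a by (simp_all add: dvd_def ac_simps)
    show "n dvd x * y * z * (p ^ (b + 2) * z)"
      unfolding n a by (rule dvdI[of _ _ z]) (simp add: ac_simps)
    show "n dvd p ^ (b + 2) * z * (p ^ (b + 1) * x * y)"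
      unfolding n a by (rule dvdI[of _ _ "p ^ (b + 1)"]) (simp add: ac_simps)
    show "n dvd p ^ (b + 1) * x * y * (p * y * z)"
      unfolding n a by (rule dvdI[of _ _ y]) (simp add: ac_simps)
    show "n dvd p * y * z * (p ^ (b + 2) * x)"
      unfolding n a by (rule dvdI[of _ _ p]) (simp add: ac_simps)
    show "n dvd p ^ (b + 2) * x * (x * y * z)"
      unfolding n a by (rule dvdI[of _ _ x]) (simp add: ac_simps)
    have "\<not> n dvd p ^ (b + 1) * (x * x * y * y * z)"
      by (rule not_dvd_if_prime_power_factor[OF factors(4) p]) (use facts in auto)
    then show "\<not> n dvd x * y * z * (p ^ (b + 1) * x * y)"
      by (simp add: ac_simps)
    have "\<not> n dvd p ^ 1 * (x * y * y * z * z)"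
      by (rule not_dvd_if_prime_power_factor[OF factors(4) p]) (use facts in auto)
    then show "\<not> n dvd x * y * z * (p * y * z)"
      by (simp add: ac_simps)
    show "\<not> n dvd p ^ (b + 2) * z * (p * y * z)"
      by (rule not_dvd_if_coprime_factor[OF factors(1)]) (use facts in auto)
    show "\<not> n dvd p ^ (b + 2) * z * (p ^ (b + 2) * x)"
      by (rule not_dvd_if_coprime_factor[OF factors(2)]) (use facts in auto)
    show "\<not> n dvd p ^ (b + 1) * x * y * (p ^ (b + 2) * x)"
      by (rule not_dvd_if_coprime_factor[OF factors(3)]) (use facts in auto)
  qed
qed

lemma not_perfect_if_two_prime_squares_and_coprime_factor:
  fixes n p q a b x :: nat
  assumes n: "n = p ^ a * q ^ b * x" and p: "prime p" and q: "prime q" and "p \<noteq> q"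
    and "2 \<le> a" "2 \<le> b" and "1 < x" and coprime: "coprime p x" "coprime q x"
  shows "\<not> perfect_graph (nontrivial_divisors n) (divisor_adj n)"
proof -
  obtain c d where a: "a = c + 2" and b: "b = d + 2"
    using \<open>2 \<le> a\<close> \<open>2 \<le> b\<close> by (metis add.commute le_Suc_ex)
  have "0 < n"
    using n \<open>1 < x\<close> p q prime_gt_0_nat by simp
  have factors: "x dvd n" "p ^ (c + 2) dvd n" "q ^ (d + 2) dvd n"
    unfolding n a b by simp_all
  have "coprime p q"
    using p q \<open>p \<noteq> q\<close> by (simp add: primes_coprime)
  note facts = \<open>1 < x\<close> coprime this coprime[THEN coprime_commute[THEN iffD1]]
    this[THEN coprime_commute[THEN iffD1]]
  show ?thesis
  proof (rule divisor_pentagon_not_perfect[OF \<open>0 < n\<close>, of "q ^ (d + 2) * x" "p ^ (c + 2) * x"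
        "p ^ (c + 1) * q ^ (d + 2)" "p * q ^ (d + 1) * x" "p ^ (c + 2) * q"])
    show "q ^ (d + 2) * x dvd n" "p ^ (c + 2) * x dvd n" "p ^ (c + 1) * q ^ (d + 2) dvd n"
      "p * q ^ (d + 1) * x dvd n" "p ^ (c + 2) * q dvd n"
      unfolding n a b by (simp_all add: dvd_def ac_simps)
    show "n dvd q ^ (d + 2) * x * (p ^ (c + 2) * x)"
      unfolding n a b by (rule dvdI[of _ _ x]) (simp add: ac_simps)
    show "n dvd p ^ (c + 2) * x * (p ^ (c + 1) * q ^ (d + 2))"
      unfolding n a b by (rule dvdI[of _ _ "p ^ (c + 1)"]) (simp add: ac_simps)
    show "n dvd p ^ (c + 1) * q ^ (d + 2) * (p * q ^ (d + 1) * x)"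
      unfolding n a b by (rule dvdI[of _ _ "q ^ (d + 1)"]) (simp add: ac_simps)
    show "n dvd p * q ^ (d + 1) * x * (p ^ (c + 2) * q)"
      unfolding n a b by (rule dvdI[of _ _ p]) (simp add: ac_simps)
    show "n dvd p ^ (c + 2) * q * (q ^ (d + 2) * x)"
      unfolding n a b by (rule dvdI[of _ _ q]) (simp add: ac_simps)
    have "\<not> n dvd p ^ (c + 1) * (q ^ (d + 2) * q ^ (d + 2) * x)"
      by (rule not_dvd_if_prime_power_factor[OF factors(2) p]) (use facts in auto)
    then show "\<not> n dvd q ^ (d + 2) * x * (p ^ (c + 1) * q ^ (d + 2))"
      by (simp add: ac_simps)
    have "\<not> n dvd p ^ 1 * (q ^ (d + 2) * q ^ (d + 1) * x * x)"
      by (rule not_dvd_if_prime_power_factor[OF factors(2) p]) (use facts in auto)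
    then show "\<not> n dvd q ^ (d + 2) * x * (p * q ^ (d + 1) * x)"
      by (simp add: ac_simps)
    have "\<not> n dvd q ^ (d + 1) * (p ^ (c + 2) * p * x * x)"
      by (rule not_dvd_if_prime_power_factor[OF factors(3) q]) (use facts in auto)
    then show "\<not> n dvd p ^ (c + 2) * x * (p * q ^ (d + 1) * x)"
      by (simp add: ac_simps)
    have "\<not> n dvd q ^ 1 * (p ^ (c + 2) * p ^ (c + 2) * x)"
      by (rule not_dvd_if_prime_power_factor[OF factors(3) q]) (use facts in auto)
    then show "\<not> n dvd p ^ (c + 2) * x * (p ^ (c + 2) * q)"
      by (simp add: ac_simps)
    show "\<not> n dvd p ^ (c + 1) * q ^ (d + 2) * (p ^ (c + 2) * q)"
      by (rule not_dvd_if_coprime_factor[OF factors(1)]) (use facts in auto)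
  qed
qed

section \<open>Shapes of n with a perfect divisor graph\<close>

lemma prime_power_factorE:
  fixes m :: nat
  assumes "1 < m"
  obtains p a r where "prime p" "1 \<le> a" "m = p ^ a * r" "coprime p r" "0 < r"
proof -
  obtain p where p: "prime p" "p dvd m"
    using prime_factor_nat[of m] assms by auto
  moreover have "m \<noteq> 0" "\<not> is_unit p"
    using assms p(1) by auto
  ultimately obtain r where r: "m = p ^ multiplicity p m * r" "\<not> p dvd r"
    using multiplicity_decompose'[of m p] by blast
  have "multiplicity p m \<noteq> 0"
  proof
    assume "multiplicity p m = 0"
    then show False
      using p(2) r by simp
  qed
  moreover have "coprime p r" "0 < r"
    using p r assms prime_imp_coprime by (auto intro: gr0I)
  ultimately show ?thesis
    using that[of p "multiplicity p m" r] p(1) r(1) by simp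
qed

definition ag_perfect_form :: "nat \<Rightarrow> bool" where
  "ag_perfect_form n \<longleftrightarrow>
    (\<exists>p1 a1. prime p1 \<and> a1 \<ge> 1 \<and> n = p1 ^ a1) \<or>
    (\<exists>p1 p2 a1 a2. prime p1 \<and> prime p2 \<and> p1 \<noteq> p2 \<and> a1 \<ge> 1 \<and> a2 \<ge> 1 \<and>
       n = p1 ^ a1 * p2 ^ a2) \<or>
    (\<exists>p1 p2 p3 a1. prime p1 \<and> prime p2 \<and> prime p3 \<and> distinct [p1, p2, p3] \<and> a1 \<ge> 1 \<and>
       n = p1 ^ a1 * p2 * p3) \<or>
    (\<exists>p1 p2 p3 p4. prime p1 \<and> prime p2 \<and> prime p3 \<and> prime p4 \<and>
       distinct [p1, p2, p3, p4] \<and> n = p1 * p2 * p3 * p4)"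

lemma prime_power_gt_1: "prime p \<Longrightarrow> 1 \<le> a \<Longrightarrow> 1 < p ^ a"
  for p a :: nat
  by (intro one_less_power prime_gt_1_nat) auto

lemma ag_perfect_form_if_three_prime_powers:
  fixes n p q r a b c :: nat
  assumes perfect: "perfect_graph (nontrivial_divisors n) (divisor_adj n)"
    and n: "n = p ^ a * q ^ b * r ^ c"
    and primes: "prime p" "prime q" "prime r" "distinct [p, q, r]"
    and "1 \<le> a" "1 \<le> b" "1 \<le> c"
  shows "ag_perfect_form n"
proof -
  have coprime: "coprime p q" "coprime p r" "coprime q r" "coprime q p" "coprime r p" "coprime r q"
    using primes by (auto simp: primes_coprime)
  have "\<not> (2 \<le> a \<and> 2 \<le> b)"
    using not_perfect_if_two_prime_squares_and_coprime_factor[of n p a q b "r ^ c"]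
      perfect n primes coprime prime_power_gt_1 \<open>1 \<le> c\<close> by auto
  moreover have "\<not> (2 \<le> a \<and> 2 \<le> c)"
    using not_perfect_if_two_prime_squares_and_coprime_factor[of n p a r c "q ^ b"]
      perfect n primes coprime prime_power_gt_1 \<open>1 \<le> b\<close> by (auto simp: ac_simps)
  moreover have "\<not> (2 \<le> b \<and> 2 \<le> c)"
    using not_perfect_if_two_prime_squares_and_coprime_factor[of n q b r c "p ^ a"]
      perfect n primes coprime prime_power_gt_1 \<open>1 \<le> a\<close> by (auto simp: ac_simps)
  ultimately consider "b = 1" "c = 1" | "a = 1" "c = 1" | "a = 1" "b = 1"
    using \<open>1 \<le> a\<close> \<open>1 \<le> b\<close> \<open>1 \<le> c\<close> by linarith
  then show ?thesis
  proof cases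
    case 1
    then have "n = p ^ a * q * r"
      using n by simp
    then show ?thesis
      using primes \<open>1 \<le> a\<close> unfolding ag_perfect_form_def by blast
  next
    case 2
    then have "n = q ^ b * p * r" "distinct [q, p, r]"
      using n primes by (auto simp: ac_simps)
    then show ?thesis
      using primes \<open>1 \<le> b\<close> unfolding ag_perfect_form_def by blast
  next
    case 3
    then have "n = r ^ c * p * q" "distinct [r, p, q]"
      using n primes by (auto simp: ac_simps)
    then show ?thesis
      using primes \<open>1 \<le> c\<close> unfolding ag_perfect_form_def by blast
  qed
qed

lemma ag_perfect_form_if_four_prime_powers:
  fixes n p1 p2 p3 p4 a1 a2 a3 a4 :: nat
  assumes perfect: "perfect_graph (nontrivial_divisors n) (divisor_adj n)"
    and n: "n = p1 ^ a1 * p2 ^ a2 * p3 ^ a3 * p4 ^ a4"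
    and primes: "prime p1" "prime p2" "prime p3" "prime p4" "distinct [p1, p2, p3, p4]"
    and "1 \<le> a1" "1 \<le> a2" "1 \<le> a3" "1 \<le> a4"
  shows "ag_perfect_form n"
proof -
  have coprime: "coprime p1 p2" "coprime p1 p3" "coprime p1 p4" "coprime p2 p3" "coprime p2 p4"
    "coprime p3 p4" "coprime p2 p1" "coprime p3 p1" "coprime p4 p1" "coprime p3 p2" "coprime p4 p2"
    "coprime p4 p3"
    using primes by (auto simp: primes_coprime)
  note facts = primes coprime prime_power_gt_1 \<open>1 \<le> a1\<close> \<open>1 \<le> a2\<close> \<open>1 \<le> a3\<close> \<open>1 \<le> a4\<close>
  have "\<not> 2 \<le> a1"
    using not_perfect_if_prime_square_and_three_coprime_factors[of n p1 a1 "p2 ^ a2" "p3 ^ a3" "p4 ^ a4"]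
      perfect n facts by (auto simp: ac_simps)
  moreover have "\<not> 2 \<le> a2"
    using not_perfect_if_prime_square_and_three_coprime_factors[of n p2 a2 "p1 ^ a1" "p3 ^ a3" "p4 ^ a4"]
      perfect n facts by (auto simp: ac_simps)
  moreover have "\<not> 2 \<le> a3"
    using not_perfect_if_prime_square_and_three_coprime_factors[of n p3 a3 "p1 ^ a1" "p2 ^ a2" "p4 ^ a4"]
      perfect n facts by (auto simp: ac_simps)
  moreover have "\<not> 2 \<le> a4"
    using not_perfect_if_prime_square_and_three_coprime_factors[of n p4 a4 "p1 ^ a1" "p2 ^ a2" "p3 ^ a3"]
      perfect n facts by (auto simp: ac_simps)
  ultimately have "a1 = 1" "a2 = 1" "a3 = 1" "a4 = 1"
    using \<open>1 \<le> a1\<close> \<open>1 \<le> a2\<close> \<open>1 \<le> a3\<close> \<open>1 \<le> a4\<close> by simp_all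
  then have "n = p1 * p2 * p3 * p4"
    using n by simp
  then show ?thesis
    using primes unfolding ag_perfect_form_def by blast
qed

lemma ag_perfect_form_if_three_prime_powers_times:
  fixes n p1 p2 p3 a1 a2 a3 r :: nat
  assumes perfect: "perfect_graph (nontrivial_divisors n) (divisor_adj n)"
    and n: "n = p1 ^ a1 * p2 ^ a2 * p3 ^ a3 * r"
    and primes: "prime p1" "prime p2" "prime p3" "distinct [p1, p2, p3]"
    and exponents: "1 \<le> a1" "1 \<le> a2" "1 \<le> a3"
    and "coprime (p1 * p2 * p3) r" "0 < r"
  shows "ag_perfect_form n"
proof (cases "r = 1")
  case True
  then show ?thesis
    using ag_perfect_form_if_three_prime_powers[OF perfect _ primes exponents] n by simp
next
  case False
  then obtain p4 a4 r4 where 4: "prime p4" "1 \<le> a4" "r = p4 ^ a4 * r4" "coprime p4 r4" "0 < r4"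
    using prime_power_factorE[of r] \<open>0 < r\<close> by auto
  have coprime: "coprime p1 p4" "coprime p2 p4" "coprime p3 p4"
    "coprime p1 r4" "coprime p2 r4" "coprime p3 r4"
    using \<open>coprime (p1 * p2 * p3) r\<close> 4 by auto
  then have "distinct [p1, p2, p3, p4]"
    using primes 4 by auto
  show ?thesis
  proof (cases "r4 = 1")
    case True
    then show ?thesis
      using ag_perfect_form_if_four_prime_powers[OF perfect _ primes(1-3) 4(1) \<open>distinct [p1, p2, p3, p4]\<close>
          exponents 4(2)] n 4(3) by (simp add: ac_simps)
  next
    case False
    moreover have "n = p1 ^ a1 * p2 ^ a2 * p3 ^ a3 * p4 ^ a4 * r4"
      using n 4(3) by (simp add: ac_simps)
    ultimately have "\<not> perfect_graph (nontrivial_divisors n) (divisor_adj n)"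
      using not_perfect_if_five_coprime_factors[of n "p1 ^ a1" "p2 ^ a2" "p3 ^ a3" "p4 ^ a4" r4]
        primes 4 exponents coprime prime_power_gt_1 \<open>0 < r4\<close> by (simp add: primes_coprime)
    then show ?thesis
      using perfect by blast
  qed
qed

lemma ag_perfect_form_if_perfect:
  assumes "2 \<le> n" and perfect: "perfect_graph (nontrivial_divisors n) (divisor_adj n)"
  shows "ag_perfect_form n"
proof (rule ccontr)
  assume not_form: "\<not> ag_perfect_form n"
  obtain p1 a1 r1 where 1: "prime p1" "1 \<le> a1" "n = p1 ^ a1 * r1" "coprime p1 r1" "0 < r1"
    using prime_power_factorE[of n] \<open>2 \<le> n\<close> by auto
  have "r1 \<noteq> 1"
  proof
    assume "r1 = 1"
    then have "n = p1 ^ a1"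
      using 1 by simp
    then show False
      using not_form 1 unfolding ag_perfect_form_def by blast
  qed
  then obtain p2 a2 r2 where 2: "prime p2" "1 \<le> a2" "r1 = p2 ^ a2 * r2" "coprime p2 r2" "0 < r2"
    using prime_power_factorE[of r1] \<open>0 < r1\<close> by auto
  have "p1 \<noteq> p2"
    using 1 2 by auto
  have "r2 \<noteq> 1"
  proof
    assume "r2 = 1"
    then have "n = p1 ^ a1 * p2 ^ a2"
      using 1 2 by simp
    then show False
      using not_form 1 2 \<open>p1 \<noteq> p2\<close> unfolding ag_perfect_form_def by blast
  qed
  then obtain p3 a3 r3 where 3: "prime p3" "1 \<le> a3" "r2 = p3 ^ a3 * r3" "coprime p3 r3" "0 < r3"
    using prime_power_factorE[of r2] \<open>0 < r2\<close> by auto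
  have "distinct [p1, p2, p3]" "coprime (p1 * p2 * p3) r3"
    using 1 2 3 by auto
  moreover have "n = p1 ^ a1 * p2 ^ a2 * p3 ^ a3 * r3"
    using 1 2 3 by (simp add: ac_simps)
  ultimately show False
    using ag_perfect_form_if_three_prime_powers_times[OF perfect _ 1(1) 2(1) 3(1) _ 1(2) 2(2) 3(2)]
      not_form \<open>0 < r3\<close> by blast
qed

section \<open>Perfectness in the four shapes\<close>

lemma divisor_adj_iff_multiplicity:
  assumes "u \<in> nontrivial_divisors n" "w \<in> nontrivial_divisors n"
  shows "divisor_adj n u w \<longleftrightarrow> u \<noteq> w \<and>
    (\<forall>p\<in>prime_factors n. multiplicity p n \<le> multiplicity p u + multiplicity p w)"
proof -
  have "0 < u" "0 < w" "0 < n"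
    using assms unfolding nontrivial_divisors_def by auto
  then have "n dvd u * w \<longleftrightarrow> (\<forall>p. prime p \<longrightarrow> multiplicity p n \<le> multiplicity p (u * w))"
    by (auto intro: multiplicity_le_imp_dvd dvd_imp_multiplicity_le)
  also have "\<dots> \<longleftrightarrow> (\<forall>p\<in>prime_factors n. multiplicity p n \<le> multiplicity p u + multiplicity p w)"
  proof -
    have "multiplicity p n = 0" if "prime p" "p \<notin> prime_factors n" for p
      using that \<open>0 < n\<close> by (simp add: in_prime_factors_iff not_dvd_imp_multiplicity_0)
    then show ?thesis
      using \<open>0 < u\<close> \<open>0 < w\<close> by (auto simp: prime_elem_multiplicity_mult_distrib in_prime_factors_iff)
  qed
  finally show ?thesis
    unfolding divisor_adj_def by simp
qed

lemma multiplicity_le_if_nontrivial_divisor: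
  "d \<in> nontrivial_divisors n \<Longrightarrow> multiplicity p d \<le> multiplicity p n"
  unfolding nontrivial_divisors_def by (intro dvd_imp_multiplicity_le) auto

lemma perfect_divisor_graph_by_vertex_elimination:
  assumes "\<And>S. S \<subseteq> nontrivial_divisors n \<Longrightarrow> S \<noteq> {} \<Longrightarrow>
    \<exists>v\<in>S. simplicial_vertex S (divisor_adj n) v \<or> dominated_vertex S (divisor_adj n) v"
  shows "perfect_graph (nontrivial_divisors n) (divisor_adj n)"
  using perfect_graph_by_vertex_elimination[OF finite_nontrivial_divisors] divisor_adj_sym
    divisor_adj_irrefl assms by blast

lemma perfect_divisor_graph_prime_power:
  fixes p a :: nat
  assumes "prime p" "1 \<le> a"
  shows "perfect_graph (nontrivial_divisors (p ^ a)) (divisor_adj (p ^ a))"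
proof (rule perfect_divisor_graph_by_vertex_elimination)
  fix S assume S: "S \<subseteq> nontrivial_divisors (p ^ a)" "S \<noteq> {}"
  have "divisor_adj (p ^ a) u w \<longleftrightarrow> u \<noteq> w \<and> a \<le> multiplicity p u + multiplicity p w"
    if "u \<in> S" "w \<in> S" for u w
    using divisor_adj_iff_multiplicity[of u "p ^ a" w] that S(1) assms
    by (auto simp: prime_factors_power prime_prime_factors)
  then show "\<exists>v\<in>S. simplicial_vertex S (divisor_adj (p ^ a)) v \<or>
      dominated_vertex S (divisor_adj (p ^ a)) v"
    using simplicial_vertex_threshold1[of S _ a "multiplicity p"] S(2) by blast
qed

lemma perfect_divisor_graph_two_prime_powers:
  fixes p q a b :: nat
  assumes "prime p" "prime q" "p \<noteq> q" "1 \<le> a" "1 \<le> b"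
  shows "perfect_graph (nontrivial_divisors (p ^ a * q ^ b)) (divisor_adj (p ^ a * q ^ b))"
proof (rule perfect_divisor_graph_by_vertex_elimination)
  let ?n = "p ^ a * q ^ b"
  fix S assume S: "S \<subseteq> nontrivial_divisors ?n" "S \<noteq> {}"
  have "divisor_adj ?n u w \<longleftrightarrow> u \<noteq> w \<and> a \<le> multiplicity p u + multiplicity p w
      \<and> b \<le> multiplicity q u + multiplicity q w"
    if "u \<in> S" "w \<in> S" for u w
    using divisor_adj_iff_multiplicity[of u ?n w] that S(1) assms
    by (auto simp: prime_factors_product prime_factors_power prime_prime_factors
        prime_elem_multiplicity_mult_distrib multiplicity_distinct_prime_power)
  then show "\<exists>v\<in>S. simplicial_vertex S (divisor_adj ?n) v \<or> dominated_vertex S (divisor_adj ?n) v"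
    using removable_vertex_threshold2[of S _ a "multiplicity p" b "multiplicity q"] S(2) by blast
qed

lemma perfect_divisor_graph_prime_power_two_primes:
  fixes p q r a :: nat
  assumes "prime p" "prime q" "prime r" "distinct [p, q, r]" "1 \<le> a"
  shows "perfect_graph (nontrivial_divisors (p ^ a * q * r)) (divisor_adj (p ^ a * q * r))"
proof (rule perfect_divisor_graph_by_vertex_elimination)
  let ?n = "p ^ a * q * r"
  fix S assume S: "S \<subseteq> nontrivial_divisors ?n" "S \<noteq> {}"
  have multiplicities: "multiplicity p ?n = a" "multiplicity q ?n = 1" "multiplicity r ?n = 1"
    using assms by (simp_all add: prime_elem_multiplicity_mult_distrib multiplicity_distinct_prime_power
        prime_multiplicity_other)
  have "prime_factors ?n = {p, q, r}"
    using assms by (auto simp: prime_factors_product prime_factors_power prime_prime_factors)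
  then have "divisor_adj ?n u w \<longleftrightarrow> u \<noteq> w \<and> a \<le> multiplicity p u + multiplicity p w
      \<and> 1 \<le> multiplicity q u + multiplicity q w \<and> 1 \<le> multiplicity r u + multiplicity r w"
    if "u \<in> S" "w \<in> S" for u w
    using divisor_adj_iff_multiplicity[of u ?n w] that S(1) multiplicities by auto
  moreover have "multiplicity q v \<le> 1 \<and> multiplicity r v \<le> 1" if "v \<in> S" for v
    using multiplicity_le_if_nontrivial_divisor[of v ?n] that S(1) multiplicities by (metis subsetD)
  ultimately show "\<exists>v\<in>S. simplicial_vertex S (divisor_adj ?n) v \<or> dominated_vertex S (divisor_adj ?n) v"
    using removable_vertex_threshold3[of S _ a "multiplicity p" "multiplicity q" "multiplicity r"] S(2)
    by blast
qed

lemma perfect_divisor_graph_four_primes: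
  fixes p q r s :: nat
  assumes "prime p" "prime q" "prime r" "prime s" "distinct [p, q, r, s]"
  shows "perfect_graph (nontrivial_divisors (p * q * r * s)) (divisor_adj (p * q * r * s))"
proof (rule perfect_divisor_graph_by_vertex_elimination)
  let ?n = "p * q * r * s"
  fix S assume S: "S \<subseteq> nontrivial_divisors ?n" "S \<noteq> {}"
  have multiplicities: "multiplicity p ?n = 1" "multiplicity q ?n = 1" "multiplicity r ?n = 1"
      "multiplicity s ?n = 1"
    using assms by (simp_all add: prime_elem_multiplicity_mult_distrib prime_multiplicity_other)
  have "prime_factors ?n = {p, q, r, s}"
    using assms by (auto simp: prime_factors_product prime_prime_factors)
  then have "divisor_adj ?n u w \<longleftrightarrow> u \<noteq> w \<and> 1 \<le> multiplicity p u + multiplicity p w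
      \<and> 1 \<le> multiplicity q u + multiplicity q w \<and> 1 \<le> multiplicity r u + multiplicity r w
      \<and> 1 \<le> multiplicity s u + multiplicity s w"
    if "u \<in> S" "w \<in> S" for u w
    using divisor_adj_iff_multiplicity[of u ?n w] that S(1) multiplicities by auto
  moreover have "multiplicity p v \<le> 1 \<and> multiplicity q v \<le> 1 \<and> multiplicity r v \<le> 1
      \<and> multiplicity s v \<le> 1" if "v \<in> S" for v
    using multiplicity_le_if_nontrivial_divisor[of v ?n] that S(1) multiplicities by (metis subsetD)
  ultimately show "\<exists>v\<in>S. simplicial_vertex S (divisor_adj ?n) v \<or> dominated_vertex S (divisor_adj ?n) v"
    using removable_vertex_threshold4[of S _ "multiplicity p" "multiplicity q" "multiplicity r"
        "multiplicity s"] S(2)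
    by blast
qed

lemma perfect_divisor_graph_iff:
  assumes "2 \<le> n"
  shows "perfect_graph (nontrivial_divisors n) (divisor_adj n) \<longleftrightarrow> ag_perfect_form n"
proof
  assume "ag_perfect_form n"
  then show "perfect_graph (nontrivial_divisors n) (divisor_adj n)"
    unfolding ag_perfect_form_def
    using perfect_divisor_graph_prime_power perfect_divisor_graph_two_prime_powers
      perfect_divisor_graph_prime_power_two_primes perfect_divisor_graph_four_primes
    by (elim disjE exE conjE) simp_all
qed (use ag_perfect_form_if_perfect assms in blast)

theorem theorem1:
  fixes n :: nat
  assumes "n \<ge> 2"
  shows "perfect_graph (ag_vertices (residue_ring (int n))) (ag_adj (residue_ring (int n)))
    \<longleftrightarrow>
    ((\<exists>p1 a1. prime p1 \<and> a1 \<ge> 1 \<and> n = p1 ^ a1) \<or>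
     (\<exists>p1 p2 a1 a2. prime p1 \<and> prime p2 \<and> p1 \<noteq> p2 \<and> a1 \<ge> 1 \<and> a2 \<ge> 1 \<and>
        n = p1 ^ a1 * p2 ^ a2) \<or>
     (\<exists>p1 p2 p3 a1. prime p1 \<and> prime p2 \<and> prime p3 \<and> distinct [p1, p2, p3] \<and> a1 \<ge> 1 \<and>
        n = p1 ^ a1 * p2 * p3) \<or>
     (\<exists>p1 p2 p3 p4. prime p1 \<and> prime p2 \<and> prime p3 \<and> prime p4 \<and>
        distinct [p1, p2, p3, p4] \<and> n = p1 * p2 * p3 * p4))"
  using perfect_ag_residue_ring_iff[OF assms] perfect_divisor_graph_iff[OF assms]
  unfolding ag_perfect_form_def by simp

end
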